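(* Let $k$ be a positive integer, let $D$ be a digraph containing no subdivision of $B(k,1;k)$, let $\mathcal{C}$ be a $k$-suitable collection of directed cycles of $D$, and let $C_1\in\mathcal{C}$. Then the digraph $I^+(C_1)$ contains no directed cycle.
   Context: A collection $\mathcal{C}$ of directed cycles is $k$-suitable if every cycle of $\mathcal{C}$ has length at least $8k$ and for any two distinct $C_i,C_j\in\mathcal{C}$, the set $V(C_i)\cap V(C_j)$ is either empty or the vertex set of a directed path $P_{i,j}$ with at most $k$ vertices which is a subpath of both $C_i$ and $C_j$; $s_{i,j}$, $t_{i,j}$ denote the initial and terminal vertices of $P_{i,j}$. For a directed cycle $C$ and vertices $a,b$ on it, $C[a,b]$ is the directed subpath of $C$ from $a$ to $b$, and $C]a,b]$ denotes it with $a$ removed. $\mathcal{C}\cap C_1$ denotes the set of cycles of $\mathcal{C}$ other than $C_1$ sharing a vertex with $C_1$. For $C_j\in\mathcal{C}\cap C_1$, let $t(Q_j)$ be the vertex of $C_j$ with $C_j[t_{1,j},t(Q_j)]$ of length $3k$, and $Q^+_j=C_j]t_{1,j},t(Q_j)]$. $I^+(C_1)=\bigcup_{C_j\in\mathcal{C}\cap C_1}Q^+_j$ (union of digraphs). A digraph contains a subdivision of $B(k_1,k_2;k_3)$ if there exist distinct vertices $u,w$ and three pairwise internally vertex-disjoint directed paths: two from $u$ to $w$ of lengths at least $k_1$ and $k_2$, and one from $w$ to $u$ of length at least $k_3$. *)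

theory Defs
  imports Main
begin

text \<open>A digraph is a pair (V, E) with a vertex set V and arc set E \<subseteq> V \<times> V.
  A directed cycle is represented by its arc set.\<close>

definition digraph :: "'a set \<Rightarrow> ('a \<times> 'a) set \<Rightarrow> bool" where
  "digraph V E \<longleftrightarrow> finite V \<and> E \<subseteq> V \<times> V"

definition verts :: "('a \<times> 'a) set \<Rightarrow> 'a set" where
  "verts A = Domain A \<union> Range A"

definition is_dicycle :: "('a \<times> 'a) set \<Rightarrow> bool" where
  "is_dicycle A \<longleftrightarrow> (\<exists>vs. 2 \<le> length vs \<and> distinct vs \<and>
     A = {(vs ! i, vs ! (Suc i mod length vs)) | i. i < length vs})"

definition cyc_len :: "('a \<times> 'a) set \<Rightarrow> nat" where
  "cyc_len A = card A"

definition is_dipath :: "('a \<times> 'a) set \<Rightarrow> 'a list \<Rightarrow> bool" where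
  "is_dipath E ps \<longleftrightarrow> ps \<noteq> [] \<and> distinct ps \<and>
     (\<forall>i. Suc i < length ps \<longrightarrow> (ps ! i, ps ! Suc i) \<in> E)"

definition has_B_subdivision :: "'a set \<Rightarrow> ('a \<times> 'a) set \<Rightarrow> nat \<Rightarrow> nat \<Rightarrow> nat \<Rightarrow> bool" where
  "has_B_subdivision V E k1 k2 k3 \<longleftrightarrow>
     (\<exists>u w P1 P2 P3. u \<in> V \<and> w \<in> V \<and> u \<noteq> w \<and>
        is_dipath E P1 \<and> is_dipath E P2 \<and> is_dipath E P3 \<and> P1 \<noteq> P2 \<and>
        hd P1 = u \<and> last P1 = w \<and> hd P2 = u \<and> last P2 = w \<and>
        hd P3 = w \<and> last P3 = u \<and>
        length P1 - 1 \<ge> k1 \<and> length P2 - 1 \<ge> k2 \<and> length P3 - 1 \<ge> k3 \<and>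
        set P1 \<inter> set P2 = {u, w} \<and> set P1 \<inter> set P3 = {u, w} \<and> set P2 \<inter> set P3 = {u, w})"

definition k_suitable :: "('a \<times> 'a) set \<Rightarrow> nat \<Rightarrow> ('a \<times> 'a) set set \<Rightarrow> bool" where
  "k_suitable E k \<C> \<longleftrightarrow>
     (\<forall>C\<in>\<C>. is_dicycle C \<and> C \<subseteq> E \<and> cyc_len C \<ge> 8 * k) \<and>
     (\<forall>Ci\<in>\<C>. \<forall>Cj\<in>\<C>. Ci \<noteq> Cj \<longrightarrow>
        verts Ci \<inter> verts Cj = {} \<or>
        (\<exists>ps. is_dipath Ci ps \<and> is_dipath Cj ps \<and> set ps = verts Ci \<inter> verts Cj \<and> length ps \<le> k))"

definition cyc_succ :: "('a \<times> 'a) set \<Rightarrow> 'a \<Rightarrow> 'a" where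
  "cyc_succ A v = (THE w. (v, w) \<in> A)"

definition common_path :: "('a \<times> 'a) set \<Rightarrow> ('a \<times> 'a) set \<Rightarrow> 'a list" where
  "common_path Ci Cj = (THE ps. is_dipath Ci ps \<and> is_dipath Cj ps \<and> set ps = verts Ci \<inter> verts Cj)"

definition t_vert :: "('a \<times> 'a) set \<Rightarrow> ('a \<times> 'a) set \<Rightarrow> 'a" where
  "t_vert Ci Cj = last (common_path Ci Cj)"

text \<open>Q^+_j = C_j]t_{1,j}, t(Q_j)] where C_j[t_{1,j}, t(Q_j)] has length 3k,
  as a digraph (vertex set, arc set).\<close>
definition Qplus :: "nat \<Rightarrow> ('a \<times> 'a) set \<Rightarrow> ('a \<times> 'a) set \<Rightarrow> 'a set \<times> ('a \<times> 'a) set" where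
  "Qplus k C1 Cj =
     (let t = t_vert C1 Cj; s = cyc_succ Cj in
      ({(s ^^ i) t | i. 1 \<le> i \<and> i \<le> 3 * k},
       {((s ^^ i) t, (s ^^ Suc i) t) | i. 1 \<le> i \<and> i < 3 * k}))"

definition meeting :: "('a \<times> 'a) set set \<Rightarrow> ('a \<times> 'a) set \<Rightarrow> ('a \<times> 'a) set set" where
  "meeting \<C> C1 = {Cj \<in> \<C>. Cj \<noteq> C1 \<and> verts Cj \<inter> verts C1 \<noteq> {}}"

definition Iplus :: "nat \<Rightarrow> ('a \<times> 'a) set set \<Rightarrow> ('a \<times> 'a) set \<Rightarrow> 'a set \<times> ('a \<times> 'a) set" where
  "Iplus k \<C> C1 =
     ((\<Union>Cj\<in>meeting \<C> C1. fst (Qplus k C1 Cj)), (\<Union>Cj\<in>meeting \<C> C1. snd (Qplus k C1 Cj)))"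

definition has_dicycle :: "'a set \<times> ('a \<times> 'a) set \<Rightarrow> bool" where
  "has_dicycle G \<longleftrightarrow> (\<exists>A. A \<subseteq> snd G \<and> is_dicycle A)"

end

theory Submission
  imports Defs "HOL-Number_Theory.Cong"
begin

(* A vertex of Q\<^sup>+\<^sub>j is t\<^sub>1\<^sub>,\<^sub>j advanced d steps along C\<^sub>j with 1 \<le> d \<le> 3k, and
   every arc of I\<^sup>+(C\<^sub>1) raises this depth d by one; so I\<^sup>+(C\<^sub>1) is acyclic as soon as
   the depth of a vertex does not depend on the path Q\<^sup>+\<^sub>j used to reach it.

   Suppose a vertex lies at depth d\<^sub>j on Q\<^sup>+\<^sub>j and at depth d\<^sub>l > d\<^sub>j on Q\<^sup>+\<^sub>l. It lies on
   the common path P\<^sub>j\<^sub>,\<^sub>l (at most k vertices, first vertex p). If t\<^sub>1\<^sub>,\<^sub>j were on P\<^sub>j\<^sub>,\<^sub>l,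
   then walking along C\<^sub>l from t\<^sub>1\<^sub>,\<^sub>j would reach t\<^sub>1\<^sub>,\<^sub>l within k steps, forcing
   d\<^sub>l \<le> d\<^sub>j. Hence both Q\<^sup>+\<^sub>j and Q\<^sup>+\<^sub>l enter P\<^sub>j\<^sub>,\<^sub>l at p, from outside the other cycle.
   Since C\<^sub>1 has length at least 8k, up to swapping j and l the vertex t\<^sub>1\<^sub>,\<^sub>j lies at
   least 4k steps after t\<^sub>1\<^sub>,\<^sub>l on C\<^sub>1. Then C\<^sub>1[t\<^sub>1\<^sub>,\<^sub>l, t\<^sub>1\<^sub>,\<^sub>j] C\<^sub>j]t\<^sub>1\<^sub>,\<^sub>j, p] and the two
   arcs of C\<^sub>l between t\<^sub>1\<^sub>,\<^sub>l and p form a subdivision of B(k,1;k). *)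

abbreviation walk :: "('a \<times> 'a) set \<Rightarrow> nat \<Rightarrow> 'a \<Rightarrow> 'a" where
  "walk C m \<equiv> cyc_succ C ^^ m"

lemma walk_walk [simp]: "walk C m (walk C n x) = walk C (m + n) x"
  by (simp add: funpow_add)

locale dicycle =
  fixes C :: "('a \<times> 'a) set"
  assumes is_dicycle: "is_dicycle C"
begin

definition vs :: "'a list" where
  "vs = (SOME ws. 2 \<le> length ws \<and> distinct ws \<and>
     C = {(ws ! i, ws ! (Suc i mod length ws)) | i. i < length ws})"

lemma vs: "2 \<le> length vs" "distinct vs"
  and arc_iff: "(a, b) \<in> C \<longleftrightarrow> (\<exists>i<length vs. a = vs ! i \<and> b = vs ! (Suc i mod length vs))"
proof -
  have "\<exists>ws. 2 \<le> length ws \<and> distinct ws \<and>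
     C = {(ws ! i, ws ! (Suc i mod length ws)) | i. i < length ws}"
    using is_dicycle unfolding is_dicycle_def by blast
  from someI_ex[OF this, folded vs_def]
  have "2 \<le> length vs" "distinct vs"
    and C: "C = {(vs ! i, vs ! (Suc i mod length vs)) | i. i < length vs}"
    by auto
  then show "2 \<le> length vs" "distinct vs"
    by simp_all
  show "(a, b) \<in> C \<longleftrightarrow> (\<exists>i<length vs. a = vs ! i \<and> b = vs ! (Suc i mod length vs))"
    using C by blast
qed

lemma length_vs_pos: "0 < length vs"
  using vs(1) by linarith

lemma card_eq_length_vs: "card C = length vs"
proof -
  have "C = (\<lambda>i. (vs ! i, vs ! (Suc i mod length vs))) ` {..<length vs}"
    using arc_iff by auto
  moreover have "inj_on (\<lambda>i. (vs ! i, vs ! (Suc i mod length vs))) {..<length vs}"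
    using vs(2) by (auto simp: inj_on_def nth_eq_iff_index_eq)
  ultimately show ?thesis
    by (metis card_image card_lessThan)
qed

lemma card_ge_2: "2 \<le> card C"
  using vs(1) card_eq_length_vs by simp

lemma verts_eq_set_vs: "verts C = set vs"
proof
  show "verts C \<subseteq> set vs"
    using length_vs_pos unfolding verts_def by (auto simp: arc_iff)
  show "set vs \<subseteq> verts C"
  proof
    fix x assume "x \<in> set vs"
    then obtain i where "i < length vs" "x = vs ! i"
      by (auto simp: in_set_conv_nth)
    then have "(x, vs ! (Suc i mod length vs)) \<in> C"
      by (auto simp: arc_iff)
    then show "x \<in> verts C"
      unfolding verts_def by blast
  qed
qed

lemma cyc_succ_nth:
  assumes "i < length vs"
  shows "cyc_succ C (vs ! i) = vs ! (Suc i mod length vs)"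
  unfolding cyc_succ_def
proof (rule the_equality)
  show "(vs ! i, vs ! (Suc i mod length vs)) \<in> C"
    using arc_iff assms by auto
  fix w assume "(vs ! i, w) \<in> C"
  then show "w = vs ! (Suc i mod length vs)"
    using vs(2) assms by (auto simp: arc_iff nth_eq_iff_index_eq)
qed

lemma walk_nth:
  assumes "i < length vs"
  shows "walk C m (vs ! i) = vs ! ((i + m) mod length vs)"
proof (induction m)
  case (Suc m)
  have "walk C (Suc m) (vs ! i) = cyc_succ C (vs ! ((i + m) mod length vs))"
    using Suc by simp
  also have "\<dots> = vs ! ((i + Suc m) mod length vs)"
    using length_vs_pos by (simp add: cyc_succ_nth mod_Suc_eq)
  finally show ?case .
qed (use assms in simp)

lemma verts_nthE:
  assumes "x \<in> verts C"
  obtains i where "i < length vs" "x = vs ! i"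
  using assms by (auto simp: verts_eq_set_vs in_set_conv_nth)

lemma walk_in_verts:
  assumes "x \<in> verts C"
  shows "walk C m x \<in> verts C"
proof -
  obtain i where "i < length vs" "x = vs ! i"
    using assms by (rule verts_nthE)
  then show ?thesis
    using length_vs_pos by (simp add: walk_nth verts_eq_set_vs)
qed

lemma arc_cyc_succ:
  assumes "x \<in> verts C"
  shows "(x, cyc_succ C x) \<in> C"
proof -
  obtain i where "i < length vs" "x = vs ! i"
    using assms by (rule verts_nthE)
  then show ?thesis
    unfolding arc_iff by (auto simp: cyc_succ_nth)
qed

lemma cyc_succ_arc:
  assumes "(x, y) \<in> C"
  shows "y = cyc_succ C x"
proof -
  obtain i where "i < length vs" "x = vs ! i" "y = vs ! (Suc i mod length vs)"
    using assms arc_iff by blast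
  then show ?thesis
    by (simp add: cyc_succ_nth)
qed

lemma walk_eq_iff:
  assumes "x \<in> verts C"
  shows "walk C i x = walk C j x \<longleftrightarrow> [i = j] (mod card C)"
proof -
  obtain p where p: "p < length vs" "x = vs ! p"
    using assms by (rule verts_nthE)
  have "walk C i x = walk C j x \<longleftrightarrow> [p + i = p + j] (mod length vs)"
    using p vs(2) length_vs_pos by (simp add: walk_nth nth_eq_iff_index_eq cong_def)
  then show ?thesis
    by (simp add: cong_add_lcancel_nat card_eq_length_vs)
qed

lemma walk_card: "x \<in> verts C \<Longrightarrow> walk C (card C) x = x"
  using walk_eq_iff[of x "card C" 0] by (simp add: cong_def)

lemma walk_eq_imp_eq:
  assumes "x \<in> verts C" "walk C i x = walk C j x" "i \<le> j" "j < i + card C"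
  shows "i = j"
proof -
  have "[i + 0 = i + (j - i)] (mod card C)"
    using assms(1-3) by (simp add: walk_eq_iff)
  then have "[0 = j - i] (mod card C)"
    by (simp only: cong_add_lcancel_nat)
  then have "0 = j - i"
    by (rule cong_less_modulus_unique_nat) (use assms(4) card_ge_2 in linarith)+
  then show ?thesis
    using assms(3) by simp
qed

lemma walk_neq_self: "x \<in> verts C \<Longrightarrow> 0 < m \<Longrightarrow> m < card C \<Longrightarrow> walk C m x \<noteq> x"
  using walk_eq_imp_eq[of x 0 m] by auto

lemma walk_reaches:
  assumes "x \<in> verts C" "y \<in> verts C"
  obtains m where "m < card C" "walk C m x = y"
proof -
  obtain i j where i: "i < length vs" "x = vs ! i" and j: "j < length vs" "y = vs ! j"
    using assms by (meson verts_nthE)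
  have "(i + (length vs + j - i)) mod length vs = j"
    using i j by simp
  then have "walk C ((length vs + j - i) mod length vs) x = y"
    using i j by (simp add: walk_nth mod_add_right_eq)
  then show ?thesis
    using that length_vs_pos by (metis card_eq_length_vs mod_less_divisor)
qed

lemma walk_inj:
  assumes "x \<in> verts C" "y \<in> verts C" "walk C m x = walk C m y"
  shows "x = y"
proof -
  obtain r where r: "r < card C" "walk C r x = y"
    using assms(1,2) by (rule walk_reaches)
  then have "walk C (m + 0) x = walk C (m + r) x"
    using assms(3) by auto
  then have "[0 = r] (mod card C)"
    using assms(1) by (simp only: walk_eq_iff cong_add_lcancel_nat)
  then have "r = 0"
    using r(1) by (simp add: cong_def)
  then show ?thesis
    using r(2) by simp
qed

lemma dipath_nth:
  assumes "is_dipath C P" "i < length P"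
  shows "P ! i = walk C i (hd P)"
  using assms(2)
proof (induction i)
  case 0
  then show ?case
    using assms(1) by (simp add: is_dipath_def hd_conv_nth)
next
  case (Suc i)
  have "(P ! i, P ! Suc i) \<in> C"
    using assms(1) Suc.prems unfolding is_dipath_def by blast
  then have "P ! Suc i = cyc_succ C (P ! i)"
    by (rule cyc_succ_arc)
  then show ?case
    using Suc by simp
qed

lemma dipath_walk_to_last:
  assumes "is_dipath C P" "x \<in> set P"
  obtains f where "f < length P" "walk C f x = last P" "\<forall>g\<le>f. walk C g x \<in> set P"
proof -
  obtain r where r: "r < length P" "x = P ! r"
    using assms(2) by (auto simp: in_set_conv_nth)
  then have "P \<noteq> []"
    by auto
  have walk_x: "walk C g x = P ! (r + g)" if "r + g < length P" for g
    using r that dipath_nth[OF assms(1)] by (simp add: add.commute)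
  show ?thesis
  proof
    show "length P - 1 - r < length P"
      using r by simp
    show "walk C (length P - 1 - r) x = last P"
      using walk_x[of "length P - 1 - r"] r \<open>P \<noteq> []\<close> by (simp add: last_conv_nth)
    show "\<forall>g\<le>length P - 1 - r. walk C g x \<in> set P"
      using walk_x r by simp
  qed
qed

lemma dipath_unique:
  assumes "is_dipath C ps" "is_dipath C qs" "set ps = set qs" "set ps \<subseteq> verts C"
    and "2 * length ps < card C"
  shows "ps = qs"
proof -
  have ne: "ps \<noteq> []" "qs \<noteq> []" and len: "length ps = length qs"
    using assms(1-3) by (auto simp: is_dipath_def distinct_card[symmetric])
  obtain b where b: "b < length ps" "hd qs = walk C b (hd ps)"
    using assms(3) hd_in_set[OF ne(2)] dipath_nth[OF assms(1)] by (metis in_set_conv_nth)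
  obtain c where c: "c < length qs" "hd ps = walk C c (hd qs)"
    using assms(3) hd_in_set[OF ne(1)] dipath_nth[OF assms(2)] by (metis in_set_conv_nth)
  have "walk C 0 (hd ps) = walk C c (walk C b (hd ps))"
    using b(2) c(2) by (simp only: funpow_0)
  then have eq: "walk C 0 (hd ps) = walk C (c + b) (hd ps)"
    by simp
  have hd_ps: "hd ps \<in> verts C"
    using assms(4) hd_in_set[OF ne(1)] by blast
  have "0 = c + b"
    by (rule walk_eq_imp_eq[OF hd_ps eq]) (use b(1) c(1) len assms(5) in linarith)+
  then have "hd qs = hd ps"
    using b by simp
  then show ?thesis
    using len dipath_nth[OF assms(1)] dipath_nth[OF assms(2)] by (simp add: nth_equalityI)
qed

end

definition cyc_seg :: "('a \<times> 'a) set \<Rightarrow> 'a \<Rightarrow> nat \<Rightarrow> 'a list" where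
  "cyc_seg C x m = map (\<lambda>i. walk C i x) [0..<Suc m]"

lemma hd_cyc_seg [simp]: "hd (cyc_seg C x m) = x"
  unfolding cyc_seg_def by (simp add: hd_map del: upt_Suc)

lemma last_cyc_seg [simp]: "last (cyc_seg C x m) = walk C m x"
  unfolding cyc_seg_def by (simp add: last_map del: upt_Suc)

lemma length_cyc_seg [simp]: "length (cyc_seg C x m) = Suc m"
  unfolding cyc_seg_def by simp

lemma cyc_seg_not_Nil [simp]: "cyc_seg C x m \<noteq> []"
  unfolding cyc_seg_def by simp

lemma set_cyc_seg: "set (cyc_seg C x m) = (\<lambda>i. walk C i x) ` {..m}"
  unfolding cyc_seg_def by (simp add: atLeast0LessThan lessThan_Suc_atMost del: upt_Suc)

lemma set_tl_cyc_seg: "set (tl (cyc_seg C x m)) = (\<lambda>i. walk C i x) ` {1..m}"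
  unfolding cyc_seg_def
  by (simp add: map_tl[symmetric] atLeastLessThanSuc_atLeastAtMost del: upt_Suc)

lemma (in dicycle) cyc_seg_dipath:
  assumes "x \<in> verts C" "m < card C"
  shows "is_dipath C (cyc_seg C x m)"
proof -
  have "inj_on (\<lambda>i. walk C i x) {0..<Suc m}"
  proof (rule inj_onI)
    fix i j assume ij: "i \<in> {0..<Suc m}" "j \<in> {0..<Suc m}" "walk C i x = walk C j x"
    then have "j < i + card C" "i < j + card C"
      using assms(2) by auto
    then show "i = j"
      using ij(3) walk_eq_imp_eq[OF assms(1)] by (metis nat_le_linear)
  qed
  then show ?thesis
    unfolding is_dipath_def cyc_seg_def using arc_cyc_succ walk_in_verts[OF assms(1)]
    by (simp add: distinct_map del: upt_Suc)
qed

lemma (in dicycle) cyc_seg_split: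
  assumes "x \<in> verts C" "0 < a" "a < card C"
  shows "is_dipath C (cyc_seg C x a)" "is_dipath C (cyc_seg C (walk C a x) (card C - a))"
    and "last (cyc_seg C (walk C a x) (card C - a)) = x"
    and "set (cyc_seg C x a) \<inter> set (cyc_seg C (walk C a x) (card C - a)) = {x, walk C a x}"
proof -
  show "is_dipath C (cyc_seg C x a)" "is_dipath C (cyc_seg C (walk C a x) (card C - a))"
    using cyc_seg_dipath walk_in_verts assms by simp_all
  have "card C - a + a = card C"
    using assms(3) by simp
  then show last: "last (cyc_seg C (walk C a x) (card C - a)) = x"
    using walk_card[OF assms(1)] by simp
  show "set (cyc_seg C x a) \<inter> set (cyc_seg C (walk C a x) (card C - a)) = {x, walk C a x}"
  proof
    show "{x, walk C a x} \<subseteq> set (cyc_seg C x a) \<inter> set (cyc_seg C (walk C a x) (card C - a))"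
      using hd_in_set[OF cyc_seg_not_Nil, of C x a] last_in_set[OF cyc_seg_not_Nil, of C x a]
        hd_in_set[OF cyc_seg_not_Nil, of C "walk C a x" "card C - a"]
        last_in_set[OF cyc_seg_not_Nil, of C "walk C a x" "card C - a", unfolded last]
      by simp
    show "set (cyc_seg C x a) \<inter> set (cyc_seg C (walk C a x) (card C - a)) \<subseteq> {x, walk C a x}"
    proof
      fix z assume "z \<in> set (cyc_seg C x a) \<inter> set (cyc_seg C (walk C a x) (card C - a))"
      then obtain i i' where i: "i \<le> a" "z = walk C i x"
        and i': "i' \<le> card C - a" "z = walk C (i' + a) x"
        by (auto simp: set_cyc_seg)
      show "z \<in> {x, walk C a x}"
      proof (cases "i = 0")
        case False
        then have "i = i' + a"
          using walk_eq_imp_eq[OF assms(1)] i i' assms(3) by simp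
        then show ?thesis
          using i by simp
      qed (use i in simp)
    qed
  qed
qed

lemma dipath_mono: "is_dipath C P \<Longrightarrow> C \<subseteq> E \<Longrightarrow> is_dipath E P"
  unfolding is_dipath_def by blast

lemma dipath_append:
  assumes "is_dipath E xs" "is_dipath E ys" "last xs = hd ys" "set xs \<inter> set ys = {hd ys}"
  shows "is_dipath E (xs @ tl ys)"
proof -
  obtain y zs where ys: "ys = y # zs"
    using assms(2) by (cases ys) (auto simp: is_dipath_def)
  have xs: "distinct xs" "xs \<noteq> []" "xs ! (length xs - 1) = y"
    using assms(1,3) ys by (auto simp: is_dipath_def last_conv_nth)
  have "distinct (y # zs)" "set xs \<inter> set zs = {}"
    using assms(2,4) ys by (auto simp: is_dipath_def)
  then have "distinct (xs @ zs)"
    using xs by simp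
  moreover have "((xs @ zs) ! i, (xs @ zs) ! Suc i) \<in> E" if i: "Suc i < length (xs @ zs)" for i
  proof -
    consider "Suc i < length xs" | "Suc i = length xs" | "length xs \<le> i"
      by linarith
    then show ?thesis
    proof cases
      case 1
      then show ?thesis
        using assms(1) by (simp add: nth_append is_dipath_def)
    next
      case 2
      then have "(ys ! 0, ys ! Suc 0) \<in> E"
        using assms(2) i ys by (auto simp: is_dipath_def)
      moreover have "xs ! i = y"
        using 2 xs(3) by (metis diff_Suc_1)
      ultimately show ?thesis
        using 2 ys by (simp add: nth_append)
    next
      case 3
      have "\<forall>j. Suc j < length ys \<longrightarrow> (ys ! j, ys ! Suc j) \<in> E"
        using assms(2) by (simp add: is_dipath_def)
      moreover have "Suc (Suc (i - length xs)) < length ys"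
        using 3 i ys by simp
      ultimately have "(ys ! Suc (i - length xs), ys ! Suc (Suc (i - length xs))) \<in> E"
        by blast
      then show ?thesis
        using 3 ys by (simp add: nth_append Suc_diff_le)
    qed
  qed
  ultimately show ?thesis
    using xs ys by (simp add: is_dipath_def)
qed

locale suitable_collection =
  fixes V :: "'a set" and E :: "('a \<times> 'a) set" and k :: nat
    and CC :: "('a \<times> 'a) set set" and C1 :: "('a \<times> 'a) set"
  assumes k_pos: "1 \<le> k" and digraph: "digraph V E" and suitable: "k_suitable E k CC"
    and C1_in: "C1 \<in> CC"
begin

lemma member_dicycle: "C \<in> CC \<Longrightarrow> dicycle C"
  and member_subset: "C \<in> CC \<Longrightarrow> C \<subseteq> E"
  and member_card: "C \<in> CC \<Longrightarrow> 8 * k \<le> card C"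
  using suitable unfolding k_suitable_def cyc_len_def dicycle_def by auto

lemma member_verts_subset: "C \<in> CC \<Longrightarrow> verts C \<subseteq> V"
  using member_subset digraph unfolding digraph_def verts_def by blast

lemma common_dipath:
  assumes "Ci \<in> CC" "Cj \<in> CC" "Ci \<noteq> Cj" "verts Ci \<inter> verts Cj \<noteq> {}"
  obtains ps where "is_dipath Ci ps" "is_dipath Cj ps" "set ps = verts Ci \<inter> verts Cj"
    "length ps \<le> k"
  using suitable assms unfolding k_suitable_def by meson

lemma common_walk:
  assumes "Cj \<in> CC" "Cl \<in> CC" "Cj \<noteq> Cl" "verts Cj \<inter> verts Cl \<noteq> {}"
  obtains p m where "p \<in> verts Cj \<inter> verts Cl" "m \<le> k"
    "verts Cj \<inter> verts Cl = (\<lambda>r. walk Cj r p) ` {..<m}" "\<forall>r<m. walk Cj r p = walk Cl r p"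
proof -
  obtain ps where ps: "is_dipath Cj ps" "is_dipath Cl ps" "set ps = verts Cj \<inter> verts Cl"
    "length ps \<le> k"
    using assms by (rule common_dipath)
  interpret j: dicycle Cj using member_dicycle assms(1) .
  interpret l: dicycle Cl using member_dicycle assms(2) .
  show ?thesis
  proof
    show "hd ps \<in> verts Cj \<inter> verts Cl"
      using ps(1,3) hd_in_set by (force simp: is_dipath_def)
    have "set ps = (\<lambda>r. ps ! r) ` {..<length ps}"
      by (auto simp: in_set_conv_nth)
    also have "\<dots> = (\<lambda>r. walk Cj r (hd ps)) ` {..<length ps}"
      using j.dipath_nth[OF ps(1)] by (intro image_cong) auto
    finally show "verts Cj \<inter> verts Cl = (\<lambda>r. walk Cj r (hd ps)) ` {..<length ps}"
      using ps(3) by simp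
    show "\<forall>r<length ps. walk Cj r (hd ps) = walk Cl r (hd ps)"
      using j.dipath_nth[OF ps(1)] l.dipath_nth[OF ps(2)] by simp
  qed (rule ps(4))
qed

lemma meetingD:
  assumes "Cj \<in> meeting CC C1"
  shows "Cj \<in> CC" "Cj \<noteq> C1" "verts C1 \<inter> verts Cj \<noteq> {}"
  using assms unfolding meeting_def by auto

lemma common_path_eq:
  assumes "Cj \<in> meeting CC C1" "is_dipath C1 ps" "is_dipath Cj ps"
    and "set ps = verts C1 \<inter> verts Cj" "length ps \<le> k"
  shows "common_path C1 Cj = ps"
  unfolding common_path_def
proof (rule the_equality)
  show "is_dipath C1 ps \<and> is_dipath Cj ps \<and> set ps = verts C1 \<inter> verts Cj"
    using assms by simp
  interpret c: dicycle C1 using member_dicycle C1_in .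
  fix qs assume "is_dipath C1 qs \<and> is_dipath Cj qs \<and> set qs = verts C1 \<inter> verts Cj"
  moreover have "2 * length ps < card C1"
    using assms(5) member_card[OF C1_in] k_pos by linarith
  ultimately show "qs = ps"
    using c.dipath_unique[OF assms(2)] assms(4) by (metis inf_le1)
qed

lemma walk_to_t_vert:
  assumes "Cj \<in> meeting CC C1" "C \<in> {C1, Cj}" "x \<in> verts C1 \<inter> verts Cj"
  obtains f where "f < k" "walk C f x = t_vert C1 Cj"
    "\<forall>g\<le>f. walk C g x \<in> verts C1 \<inter> verts Cj"
proof -
  obtain ps where ps: "is_dipath C1 ps" "is_dipath Cj ps" "set ps = verts C1 \<inter> verts Cj"
    "length ps \<le> k"
    using common_dipath[OF C1_in] meetingD[OF assms(1)] by metis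
  interpret dicycle C
    using assms(2) member_dicycle C1_in meetingD(1)[OF assms(1)] by blast
  have t: "t_vert C1 Cj = last ps"
    using common_path_eq[OF assms(1) ps] unfolding t_vert_def by simp
  have "is_dipath C ps"
    using assms(2) ps(1,2) by auto
  moreover have "x \<in> set ps"
    using assms(3) ps(3) by simp
  ultimately obtain f where f: "f < length ps" "walk C f x = last ps"
    "\<forall>g\<le>f. walk C g x \<in> set ps"
    by (rule dipath_walk_to_last)
  show ?thesis
  proof (rule that)
    show "f < k"
      using f(1) ps(4) by linarith
  qed (use f t ps(3) in simp_all)
qed

lemma t_vert_mem:
  assumes "Cj \<in> meeting CC C1"
  shows "t_vert C1 Cj \<in> verts C1" "t_vert C1 Cj \<in> verts Cj"
proof -
  obtain x where "x \<in> verts C1 \<inter> verts Cj"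
    using meetingD(3)[OF assms] by blast
  then obtain f where "walk C1 f x = t_vert C1 Cj" "\<forall>g\<le>f. walk C1 g x \<in> verts C1 \<inter> verts Cj"
    using walk_to_t_vert[OF assms] by blast
  then show "t_vert C1 Cj \<in> verts C1" "t_vert C1 Cj \<in> verts Cj"
    by auto
qed

end

context suitable_collection
begin

abbreviation t1 :: "('a \<times> 'a) set \<Rightarrow> 'a" where
  "t1 Cj \<equiv> t_vert C1 Cj"

lemma cyc_seg_C1_from_t1_avoids:
  assumes ml: "Cl \<in> meeting CC C1" and y: "walk C1 y (t1 Cl) \<notin> verts Cl" "y < card C1"
  shows "set (cyc_seg C1 (t1 Cl) y) \<inter> verts Cl \<subseteq> {t1 Cl}"
proof
  interpret c: dicycle C1 using member_dicycle C1_in .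
  have tL: "t1 Cl \<in> verts C1"
    using t_vert_mem[OF ml] by simp
  fix z assume "z \<in> set (cyc_seg C1 (t1 Cl) y) \<inter> verts Cl"
  then obtain i where i: "i \<le> y" "z = walk C1 i (t1 Cl)" and z: "z \<in> verts C1 \<inter> verts Cl"
    using c.walk_in_verts[OF tL] by (auto simp: set_cyc_seg)
  then obtain f where f: "f < k" "walk C1 f z = t1 Cl" "\<forall>g\<le>f. walk C1 g z \<in> verts C1 \<inter> verts Cl"
    using walk_to_t_vert[OF ml] by blast
  have "f < y - i"
  proof (rule ccontr)
    assume "\<not> f < y - i"
    then have "walk C1 (y - i) z \<in> verts Cl"
      using f(3) by simp
    then show False
      using y(1) i by simp
  qed
  have "walk C1 0 (t1 Cl) = walk C1 (f + i) (t1 Cl)"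
    using f(2) i(2) by simp
  then have "0 = f + i"
    by (rule c.walk_eq_imp_eq[OF tL]) (use \<open>f < y - i\<close> y(2) in linarith)+
  then show "z \<in> {t1 Cl}"
    using i by simp
qed

lemma cyc_seg_from_t1_avoids_C1:
  assumes mj: "Cj \<in> meeting CC C1" and "a \<le> 3 * k"
  shows "set (cyc_seg Cj (t1 Cj) a) \<inter> verts C1 \<subseteq> {t1 Cj}"
proof
  interpret j: dicycle Cj using member_dicycle meetingD(1)[OF mj] .
  have tJ: "t1 Cj \<in> verts Cj"
    using t_vert_mem[OF mj] by simp
  fix z assume "z \<in> set (cyc_seg Cj (t1 Cj) a) \<inter> verts C1"
  then obtain i where i: "i \<le> a" "z = walk Cj i (t1 Cj)" and z: "z \<in> verts C1 \<inter> verts Cj"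
    using j.walk_in_verts[OF tJ] by (auto simp: set_cyc_seg)
  then obtain f where f: "f < k" "walk Cj f z = t1 Cj"
    using walk_to_t_vert[OF mj] by blast
  have "walk Cj 0 (t1 Cj) = walk Cj (f + i) (t1 Cj)"
    using f(2) i(2) by simp
  then have "0 = f + i"
    by (rule j.walk_eq_imp_eq[OF tJ])
      (use f(1) i(1) assms(2) member_card[OF meetingD(1)[OF mj]] in linarith)+
  then show "z \<in> {t1 Cj}"
    using i by simp
qed

lemma walk_meets_other_cycle_at_common_start:
  assumes "Cj \<in> CC" "x \<in> verts Cj" "a \<le> 3 * k"
    and "verts Cj \<inter> verts Cl \<subseteq> (\<lambda>r. walk Cj r (walk Cj a x)) ` {..<k}"
    and "i \<le> a" "walk Cj i x \<in> verts Cl"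
  shows "i = a"
proof -
  interpret j: dicycle Cj using member_dicycle assms(1) .
  obtain r where r: "r < k" "walk Cj i x = walk Cj r (walk Cj a x)"
    using assms(4) assms(6) j.walk_in_verts[OF assms(2)] by blast
  then have "walk Cj i x = walk Cj (r + a) x"
    by simp
  then have "i = r + a"
    by (rule j.walk_eq_imp_eq[OF assms(2)])
      (use r(1) assms(3,5) member_card[OF assms(1)] in linarith)+
  then show "i = a"
    using assms(5) by simp
qed

lemma dipath_along_C1_then_Cj:
  assumes mj: "Cj \<in> meeting CC C1" and ml: "Cl \<in> meeting CC C1"
    and common: "verts Cj \<inter> verts Cl \<subseteq> (\<lambda>r. walk Cj r p) ` {..<k}"
    and aj: "p = walk Cj aj (t1 Cj)" "1 \<le> aj" "aj \<le> 3 * k"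
    and y: "walk C1 y (t1 Cl) = t1 Cj" "y < card C1"
    and tJ: "t1 Cj \<notin> verts Cl"
  defines "P \<equiv> cyc_seg C1 (t1 Cl) y @ tl (cyc_seg Cj (t1 Cj) aj)"
  shows "is_dipath E P" "hd P = t1 Cl" "last P = p" "length P = Suc (y + aj)"
    and "set P \<inter> verts Cl \<subseteq> {t1 Cl, p}"
proof -
  interpret c: dicycle C1 using member_dicycle C1_in .
  interpret j: dicycle Cj using member_dicycle meetingD(1)[OF mj] .
  have tL: "t1 Cl \<in> verts C1" and tJj: "t1 Cj \<in> verts Cj"
    using t_vert_mem[OF ml] t_vert_mem[OF mj] by simp_all
  have "aj < card Cj"
    using aj(3) member_card[OF meetingD(1)[OF mj]] k_pos by linarith
  then have Sj: "is_dipath E (cyc_seg Cj (t1 Cj) aj)"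
    using dipath_mono[OF j.cyc_seg_dipath[OF tJj] member_subset[OF meetingD(1)[OF mj]]] by simp
  have S1: "is_dipath E (cyc_seg C1 (t1 Cl) y)"
    using dipath_mono[OF c.cyc_seg_dipath[OF tL y(2)] member_subset[OF C1_in]] .
  have "set (cyc_seg C1 (t1 Cl) y) \<subseteq> verts C1"
    using c.walk_in_verts[OF tL] by (auto simp: set_cyc_seg)
  then have "set (cyc_seg C1 (t1 Cl) y) \<inter> set (cyc_seg Cj (t1 Cj) aj) = {t1 Cj}"
    using cyc_seg_from_t1_avoids_C1[OF mj aj(3)] y(1)
      last_in_set[OF cyc_seg_not_Nil, of C1 "t1 Cl" y] hd_in_set[OF cyc_seg_not_Nil, of Cj "t1 Cj" aj]
    by auto
  then show "is_dipath E P"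
    unfolding P_def using y(1) by (intro dipath_append[OF S1 Sj]) simp_all
  show "hd P = t1 Cl" "length P = Suc (y + aj)"
    unfolding P_def by simp_all
  have "tl (cyc_seg Cj (t1 Cj) aj) \<noteq> []"
    using aj(2) by (metis length_cyc_seg length_tl diff_Suc_1 list.size(3) not_one_le_zero)
  then show "last P = p"
    unfolding P_def using aj(1) by (simp add: last_tl)
  show "set P \<inter> verts Cl \<subseteq> {t1 Cl, p}"
  proof
    fix z assume z: "z \<in> set P \<inter> verts Cl"
    show "z \<in> {t1 Cl, p}"
    proof (cases "z \<in> set (cyc_seg C1 (t1 Cl) y)")
      case True
      then show ?thesis
        using cyc_seg_C1_from_t1_avoids[OF ml _ y(2)] y(1) tJ z by auto
    next
      case False
      then obtain i where "i \<le> aj" "z = walk Cj i (t1 Cj)"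
        using z unfolding P_def by (auto simp: set_tl_cyc_seg)
      then show ?thesis
        using walk_meets_other_cycle_at_common_start[OF meetingD(1)[OF mj] tJj aj(3)] common aj(1) z
        by auto
    qed
  qed
qed

text \<open>The subdivision has branch vertices \<open>u = t\<^sub>1\<^sub>,\<^sub>l\<close> and \<open>w = p\<close>: the long
  \<open>u\<close>--\<open>w\<close> path runs along \<open>C\<^sub>1\<close> and then \<open>C\<^sub>j\<close>, while the short one and
  the way back are the two arcs into which \<open>u\<close> and \<open>w\<close> cut \<open>C\<^sub>l\<close>.\<close>
lemma B_subdivision_if_walks_meet:
  assumes mj: "Cj \<in> meeting CC C1" and ml: "Cl \<in> meeting CC C1"
    and common: "verts Cj \<inter> verts Cl \<subseteq> (\<lambda>r. walk Cj r p) ` {..<k}"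
    and aj: "p = walk Cj aj (t1 Cj)" "1 \<le> aj" "aj \<le> 3 * k"
    and al: "p = walk Cl al (t1 Cl)" "1 \<le> al" "al \<le> 3 * k"
    and y: "walk C1 y (t1 Cl) = t1 Cj" "4 * k \<le> y" "y < card C1"
    and tJ: "t1 Cj \<notin> verts Cl"
  shows "has_B_subdivision V E k 1 k"
proof -
  interpret l: dicycle Cl using member_dicycle meetingD(1)[OF ml] .
  have tL: "t1 Cl \<in> verts Cl" and card: "8 * k \<le> card Cl" and sub: "Cl \<subseteq> E"
    using t_vert_mem[OF ml] member_card member_subset meetingD(1)[OF ml] by simp_all
  have "0 < al" "al < card Cl"
    using al(2,3) card k_pos by linarith+
  note split = l.cyc_seg_split[OF tL this, folded al(1)]
  define P1 where "P1 = cyc_seg C1 (t1 Cl) y @ tl (cyc_seg Cj (t1 Cj) aj)"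
  define P2 where "P2 = cyc_seg Cl (t1 Cl) al"
  define P3 where "P3 = cyc_seg Cl p (card Cl - al)"
  note P1 = dipath_along_C1_then_Cj[OF mj ml common aj y(1,3) tJ, folded P1_def]
  have P2: "is_dipath E P2" "hd P2 = t1 Cl" "last P2 = p"
    using dipath_mono[OF split(1) sub] al(1) unfolding P2_def by simp_all
  have P3: "is_dipath E P3" "hd P3 = p" "last P3 = t1 Cl"
    using dipath_mono[OF split(2) sub] split(3) unfolding P3_def by simp_all
  have ne: "P1 \<noteq> []" "P2 \<noteq> []" "P3 \<noteq> []"
    using P1(4) unfolding P2_def P3_def by auto
  have ends: "{t1 Cl, p} \<subseteq> set P1" "{t1 Cl, p} \<subseteq> set P2" "{t1 Cl, p} \<subseteq> set P3"
    using hd_in_set[OF ne(1), unfolded P1(2)] last_in_set[OF ne(1), unfolded P1(3)]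
      hd_in_set[OF ne(2), unfolded P2(2)] last_in_set[OF ne(2), unfolded P2(3)]
      hd_in_set[OF ne(3), unfolded P3(2)] last_in_set[OF ne(3), unfolded P3(3)]
    by simp_all
  have p: "p \<in> verts Cl"
    using al(1) l.walk_in_verts[OF tL] by simp
  have "set P2 \<union> set P3 \<subseteq> verts Cl"
    unfolding P2_def P3_def using l.walk_in_verts tL p by (auto simp: set_cyc_seg)
  then have "set P1 \<inter> set P2 = {t1 Cl, p}" "set P1 \<inter> set P3 = {t1 Cl, p}"
    using P1(5) ends by auto
  moreover have "set P2 \<inter> set P3 = {t1 Cl, p}"
    using split(4) unfolding P2_def P3_def .
  moreover have "P1 \<noteq> P2"
    using P1(4) y(2) al(3) k_pos unfolding P2_def by auto
  moreover have "t1 Cl \<noteq> p"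
    using l.walk_neq_self[OF tL] \<open>0 < al\<close> \<open>al < card Cl\<close> al(1) by metis
  moreover have "t1 Cl \<in> V" "p \<in> V"
    using member_verts_subset[OF meetingD(1)[OF ml]] tL p by auto
  moreover have "k \<le> length P1 - 1" "1 \<le> length P2 - 1" "k \<le> length P3 - 1"
    using P1(4) y(2) al(2,3) card unfolding P2_def P3_def by simp_all
  ultimately show ?thesis
    unfolding has_B_subdivision_def using P1(1-3) P2 P3
    by (intro exI[of _ "t1 Cl"] exI[of _ p] exI[of _ P1] exI[of _ P2] exI[of _ P3]) simp
qed

lemma B_subdivision_if_Q_walks_converge:
  assumes mj: "Cj \<in> meeting CC C1" and ml: "Cl \<in> meeting CC C1"
    and common: "verts Cj \<inter> verts Cl \<subseteq> (\<lambda>r. walk Cj r p) ` {..<k}"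
      "verts Cl \<inter> verts Cj \<subseteq> (\<lambda>r. walk Cl r p) ` {..<k}"
    and aj: "p = walk Cj aj (t1 Cj)" "1 \<le> aj" "aj \<le> 3 * k"
    and al: "p = walk Cl al (t1 Cl)" "1 \<le> al" "al \<le> 3 * k"
    and t: "t1 Cj \<notin> verts Cl" "t1 Cl \<notin> verts Cj"
  shows "has_B_subdivision V E k 1 k"
proof -
  interpret c: dicycle C1 using member_dicycle C1_in .
  have tJ: "t1 Cj \<in> verts C1" and tL: "t1 Cl \<in> verts C1"
    using t_vert_mem[OF mj] t_vert_mem[OF ml] by simp_all
  obtain y where y: "y < card C1" "walk C1 y (t1 Cl) = t1 Cj"
    using c.walk_reaches[OF tL tJ] .
  show ?thesis
  proof (cases "4 * k \<le> y")
    case True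
    show ?thesis
      by (rule B_subdivision_if_walks_meet[OF mj ml common(1) aj al y(2) True y(1) t(1)])
  next
    case False
    have "t1 Cj \<noteq> t1 Cl"
      using t t_vert_mem[OF ml] by auto
    then have "0 < y"
      using y(2) by (metis funpow_0 gr0I)
    have "walk C1 (card C1 - y) (t1 Cj) = walk C1 (card C1 - y + y) (t1 Cl)"
      by (simp add: y(2)[symmetric])
    then have "walk C1 (card C1 - y) (t1 Cj) = t1 Cl"
      using y(1) c.walk_card[OF tL] by simp
    moreover have "4 * k \<le> card C1 - y" "card C1 - y < card C1"
      using False \<open>0 < y\<close> y(1) member_card[OF C1_in] by linarith+
    ultimately show ?thesis
      using B_subdivision_if_walks_meet[OF ml mj common(2) al aj] t(2) by blast
  qed
qed

lemma B_subdivision_if_Q_walks_reach_common_path: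
  assumes mj: "Cj \<in> meeting CC C1" and ml: "Cl \<in> meeting CC C1"
    and p: "p \<in> verts Cj \<inter> verts Cl"
    and pm: "m \<le> k" "verts Cj \<inter> verts Cl = (\<lambda>r. walk Cj r p) ` {..<m}"
      "\<forall>r<m. walk Cj r p = walk Cl r p"
    and e: "walk Cj dj (t1 Cj) = walk Cj e p" "walk Cl dl (t1 Cl) = walk Cl e p"
    and d: "e < dj" "dj \<le> 3 * k" "e < dl" "dl \<le> 3 * k"
  shows "has_B_subdivision V E k 1 k"
proof -
  interpret j: dicycle Cj using member_dicycle meetingD(1)[OF mj] .
  interpret l: dicycle Cl using member_dicycle meetingD(1)[OF ml] .
  have tJ: "t1 Cj \<in> verts Cj" and tL: "t1 Cl \<in> verts Cl"
    using t_vert_mem[OF mj] t_vert_mem[OF ml] by simp_all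
  define aj al where "aj = dj - e" and "al = dl - e"
  have a: "1 \<le> aj" "aj \<le> 3 * k" "1 \<le> al" "al \<le> 3 * k" "e + aj = dj" "e + al = dl"
    using d unfolding aj_def al_def by linarith+
  then have "walk Cj e p = walk Cj e (walk Cj aj (t1 Cj))"
    "walk Cl e p = walk Cl e (walk Cl al (t1 Cl))"
    using e by simp_all
  then have aj: "p = walk Cj aj (t1 Cj)" and al: "p = walk Cl al (t1 Cl)"
    using j.walk_inj[OF _ j.walk_in_verts[OF tJ]] l.walk_inj[OF _ l.walk_in_verts[OF tL]] p
    by blast+
  have m_k: "{..<m} \<subseteq> {..<k}"
    using pm(1) by auto
  have "verts Cl \<inter> verts Cj = (\<lambda>r. walk Cl r p) ` {..<m}"
    unfolding Int_commute[of "verts Cl"] pm(2) using pm(3) by (intro image_cong) simp_all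
  then have common: "verts Cj \<inter> verts Cl \<subseteq> (\<lambda>r. walk Cj r p) ` {..<k}"
    "verts Cl \<inter> verts Cj \<subseteq> (\<lambda>r. walk Cl r p) ` {..<k}"
    using pm(2) image_mono[OF m_k] by simp_all
  have "t1 Cj \<notin> verts Cl"
    using walk_meets_other_cycle_at_common_start[OF meetingD(1)[OF mj] tJ a(2), of Cl 0]
      common(1) aj a(1) by auto
  moreover have "t1 Cl \<notin> verts Cj"
    using walk_meets_other_cycle_at_common_start[OF meetingD(1)[OF ml] tL a(4), of Cj 0]
      common(2) al a(3) by auto
  ultimately show ?thesis
    using B_subdivision_if_Q_walks_converge[OF mj ml common aj a(1,2) al a(3,4)] by blast
qed

lemma walk_from_common_vertex_le:
  assumes ml: "Cl \<in> meeting CC C1" and x: "x \<in> verts C1 \<inter> verts Cl"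
    and "walk Cl a x = walk Cl b (t1 Cl)" "a \<le> 3 * k" "b \<le> 3 * k"
  shows "b \<le> a"
proof -
  interpret l: dicycle Cl using member_dicycle meetingD(1)[OF ml] .
  obtain f where f: "f < k" "walk Cl f x = t1 Cl"
    using walk_to_t_vert[OF ml _ x] by blast
  have "walk Cl a x = walk Cl (b + f) x"
    using assms(3) f(2)[symmetric] by simp
  moreover have "a < b + f + card Cl" "b + f < a + card Cl"
    using f(1) assms(4,5) member_card[OF meetingD(1)[OF ml]] by linarith+
  ultimately have "a = b + f"
    using l.walk_eq_imp_eq[of x a "b + f"] l.walk_eq_imp_eq[of x "b + f" a] x
    by (cases "a \<le> b + f") auto
  then show ?thesis
    by simp
qed

lemma B_subdivision_if_Q_vertex_at_two_depths:
  assumes mj: "Cj \<in> meeting CC C1" and ml: "Cl \<in> meeting CC C1" and "Cj \<noteq> Cl"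
    and v: "walk Cj dj (t1 Cj) = walk Cl dl (t1 Cl)"
    and d: "dj < dl" "dl \<le> 3 * k"
  shows "has_B_subdivision V E k 1 k"
proof -
  interpret j: dicycle Cj using member_dicycle meetingD(1)[OF mj] .
  interpret l: dicycle Cl using member_dicycle meetingD(1)[OF ml] .
  have tJ: "t1 Cj \<in> verts C1" "t1 Cj \<in> verts Cj" and tL: "t1 Cl \<in> verts Cl"
    using t_vert_mem[OF mj] t_vert_mem[OF ml] by simp_all
  have "walk Cj dj (t1 Cj) \<in> verts Cl"
    unfolding v by (rule l.walk_in_verts[OF tL])
  then have v_common: "walk Cj dj (t1 Cj) \<in> verts Cj \<inter> verts Cl"
    using j.walk_in_verts[OF tJ(2)] by simp
  then obtain p m where pm: "p \<in> verts Cj \<inter> verts Cl" "m \<le> k"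
    "verts Cj \<inter> verts Cl = (\<lambda>r. walk Cj r p) ` {..<m}" "\<forall>r<m. walk Cj r p = walk Cl r p"
    using common_walk[OF meetingD(1)[OF mj] meetingD(1)[OF ml] \<open>Cj \<noteq> Cl\<close>] by blast
  have "walk Cj dj (t1 Cj) \<in> (\<lambda>r. walk Cj r p) ` {..<m}"
    using v_common unfolding pm(3) .
  then obtain e where e: "e < m" "walk Cj dj (t1 Cj) = walk Cj e p"
    by blast
  have v_Cl: "walk Cl dl (t1 Cl) = walk Cl e p"
    using pm(4) e v by simp
  have "e < dj"
  proof (rule ccontr)
    assume "\<not> e < dj"
    have "walk Cj dj (t1 Cj) = walk Cj dj (walk Cj (e - dj) p)"
      using e(2) \<open>\<not> e < dj\<close> by simp
    then have "t1 Cj = walk Cj (e - dj) p"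
      using j.walk_inj[OF tJ(2) j.walk_in_verts] pm(1) by blast
    also have "\<dots> = walk Cl (e - dj) p"
      using pm(4) e(1) by simp
    finally have tJ_Cl: "t1 Cj = walk Cl (e - dj) p" .
    have "walk Cl dj (t1 Cj) = walk Cl dl (t1 Cl)"
      using v_Cl \<open>\<not> e < dj\<close> unfolding tJ_Cl by simp
    then have "dl \<le> dj"
      using walk_from_common_vertex_le[OF ml, of "t1 Cj" dj dl] tJ(1) l.walk_in_verts pm(1) d
      unfolding tJ_Cl by simp
    then show False
      using d(1) by simp
  qed
  then show ?thesis
    using B_subdivision_if_Q_walks_reach_common_path[OF mj ml pm e(2) v_Cl] d by simp
qed

end

lemma not_is_dicycle_if_rank_increases:
  fixes rank :: "'a \<Rightarrow> nat"
  assumes "\<And>x y. (x, y) \<in> A \<Longrightarrow> rank x < rank y"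
  shows "\<not> is_dicycle A"
proof
  assume "is_dicycle A"
  then obtain ws where ws: "2 \<le> length ws"
    "A = {(ws ! i, ws ! (Suc i mod length ws)) | i. i < length ws}"
    unfolding is_dicycle_def by blast
  have step: "rank (ws ! i) < rank (ws ! (Suc i mod length ws))" if "i < length ws" for i
    using assms ws(2) that by blast
  have rank_ge: "rank (ws ! 0) + i \<le> rank (ws ! i)" if "i < length ws" for i
    using that
  proof (induction i)
    case (Suc i)
    then show ?case
      using step[of i] by simp
  qed simp
  have "rank (ws ! 0) + (length ws - 1) \<le> rank (ws ! (length ws - 1))"
    by (rule rank_ge) (use ws(1) in linarith)
  moreover have "Suc (length ws - 1) = length ws"
    using ws(1) by linarith
  then have "rank (ws ! (length ws - 1)) < rank (ws ! 0)"
    using step[of "length ws - 1"] ws(1) by simp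
  ultimately show False
    by linarith
qed

text \<open>When a vertex has several representations the choice is arbitrary; under the
  hypotheses of the theorem they all agree (lemma \<open>Q_depth_unique\<close>).\<close>
definition depth :: "nat \<Rightarrow> ('a \<times> 'a) set set \<Rightarrow> ('a \<times> 'a) set \<Rightarrow> 'a \<Rightarrow> nat" where
  "depth k CC C1 x =
     (SOME d. \<exists>Cj\<in>meeting CC C1. 1 \<le> d \<and> d \<le> 3 * k \<and> x = walk Cj d (t_vert C1 Cj))"

context suitable_collection
begin

lemma Q_depth_unique:
  assumes notB: "\<not> has_B_subdivision V E k 1 k"
    and mj: "Cj \<in> meeting CC C1" and ml: "Cl \<in> meeting CC C1"
    and v: "walk Cj d (t1 Cj) = walk Cl d' (t1 Cl)"
    and d: "d \<le> 3 * k" and d': "d' \<le> 3 * k"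
  shows "d = d'"
proof (cases "Cj = Cl")
  case True
  interpret j: dicycle Cj using member_dicycle meetingD(1)[OF mj] .
  have tJ: "t1 Cj \<in> verts Cj"
    using t_vert_mem[OF mj] by simp
  have v': "walk Cj d (t1 Cj) = walk Cj d' (t1 Cj)"
    using v True by simp
  have "d < d' + card Cj" "d' < d + card Cj"
    using d d' member_card[OF meetingD(1)[OF mj]] k_pos by linarith+
  then show ?thesis
    using j.walk_eq_imp_eq[OF tJ v'] j.walk_eq_imp_eq[OF tJ v'[symmetric]] by linarith
next
  case False
  then show ?thesis
    using B_subdivision_if_Q_vertex_at_two_depths[OF mj ml False v _ d']
      B_subdivision_if_Q_vertex_at_two_depths[OF ml mj _ v[symmetric] _ d] notB
    by (metis linorder_neqE_nat)
qed

lemma depth_eq: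
  assumes notB: "\<not> has_B_subdivision V E k 1 k"
    and mj: "Cj \<in> meeting CC C1" and d: "1 \<le> d" "d \<le> 3 * k"
  shows "depth k CC C1 (walk Cj d (t1 Cj)) = d"
proof -
  have "\<exists>d'. \<exists>Cl\<in>meeting CC C1. 1 \<le> d' \<and> d' \<le> 3 * k \<and> walk Cj d (t1 Cj) = walk Cl d' (t1 Cl)"
    using mj d by blast
  from someI_ex[OF this, folded depth_def]
  obtain Cl where "Cl \<in> meeting CC C1" "1 \<le> depth k CC C1 (walk Cj d (t1 Cj))"
    "depth k CC C1 (walk Cj d (t1 Cj)) \<le> 3 * k"
    "walk Cj d (t1 Cj) = walk Cl (depth k CC C1 (walk Cj d (t1 Cj))) (t1 Cl)"
    by blast
  then show ?thesis
    using Q_depth_unique[OF notB mj] d by metis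
qed

lemma depth_increases_along_Iplus:
  assumes notB: "\<not> has_B_subdivision V E k 1 k"
    and "(x, y) \<in> snd (Iplus k CC C1)"
  shows "depth k CC C1 y = Suc (depth k CC C1 x)"
proof -
  obtain Cj i where mj: "Cj \<in> meeting CC C1" and i: "1 \<le> i" "i < 3 * k"
    and x: "x = walk Cj i (t1 Cj)" and y: "y = walk Cj (Suc i) (t1 Cj)"
    using assms(2) unfolding Iplus_def Qplus_def Let_def by auto
  have "depth k CC C1 y = Suc i"
    unfolding y by (rule depth_eq[OF notB mj]) (use i in linarith)+
  moreover have "depth k CC C1 x = i"
    unfolding x by (rule depth_eq[OF notB mj]) (use i in linarith)+
  ultimately show ?thesis
    by simp
qed

end

theorem mainTheorem14:
  fixes V :: "'a set" and E :: "('a \<times> 'a) set" and k :: nat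
    and \<C> :: "('a \<times> 'a) set set" and C1 :: "('a \<times> 'a) set"
  assumes "k \<ge> 1"
    and "digraph V E"
    and "\<not> has_B_subdivision V E k 1 k"
    and "k_suitable E k \<C>"
    and "C1 \<in> \<C>"
  shows "\<not> has_dicycle (Iplus k \<C> C1)"
proof -
  interpret suitable_collection V E k \<C> C1
    using assms(1,2,4,5) by unfold_locales
  have "\<not> is_dicycle A" if "A \<subseteq> snd (Iplus k \<C> C1)" for A
    using that depth_increases_along_Iplus[OF assms(3)]
    by (intro not_is_dicycle_if_rank_increases[where rank = "depth k \<C> C1"]) auto
  then show ?thesis
    unfolding has_dicycle_def by blast
qed

end
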